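(* Let $p\geq 5$ be an integer and $s=\frac1p$. Let $n\geq 1$ be an integer. Then there is no integer strictly between $2\left(n-\frac12\right)^s$ and $2\left(n-\frac12+\frac{1}{2^{p+1}}\right)^s$. *)

theory Defs
  imports Complex_Main
begin

end

theory Submission
  imports Defs
begin

(* Raising to the p-th power, the claim becomes 2^p (n - 1/2) < m^p < 2^p (n - 1/2) + 1/2;
   but 2^p (n - 1/2) = 2^(p-1) (2n - 1) is an integer, so the integer m^p would lie strictly
   between an integer and that integer plus 1/2. *)

lemma powr_inverse_power:
  fixes a :: real
  assumes "0 \<le> a" and "0 < p"
  shows "(a powr (1 / real p)) ^ p = a"
proof (cases "a = 0")
  case False
  with assms show ?thesis by (simp add: powr_realpow[symmetric] powr_powr)
qed (use assms in simp)

lemma powr_inverse_less_iff: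
  fixes a x :: real
  assumes "0 \<le> a" and "0 \<le> x" and "0 < p"
  shows "a powr (1 / real p) < x \<longleftrightarrow> a < x ^ p"
proof
  assume "a powr (1 / real p) < x"
  then show "a < x ^ p"
    using power_strict_mono[of "a powr (1 / real p)" x p] powr_inverse_power assms by simp
next
  assume "a < x ^ p"
  then show "a powr (1 / real p) < x"
    using power_less_imp_less_base[of "a powr (1 / real p)" p x] powr_inverse_power assms by simp
qed

lemma less_powr_inverse_iff:
  fixes b x :: real
  assumes "0 \<le> b" and "0 \<le> x" and "0 < p"
  shows "x < b powr (1 / real p) \<longleftrightarrow> x ^ p < b"
proof
  assume "x < b powr (1 / real p)"
  then show "x ^ p < b"
    using power_strict_mono[of x "b powr (1 / real p)" p] powr_inverse_power assms by simp
next
  assume "x ^ p < b"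
  then show "x < b powr (1 / real p)"
    using power_less_imp_less_base[of x p "b powr (1 / real p)"] powr_inverse_power assms by simp
qed

lemma two_power_times_half_odd:
  assumes "0 < p" and "1 \<le> n"
  shows "2 ^ p * (real n - 1/2) = real_of_int (2 ^ (p - 1) * (2 * int n - 1))"
proof -
  obtain q where "p = Suc q" using assms(1) by (cases p) auto
  then show ?thesis by (simp add: field_simps)
qed

theorem lemma3p1:
  fixes p n :: nat
  assumes "p \<ge> 5" and "n \<ge> 1"
  shows "\<not> (\<exists>m::int.
            2 * (real n - 1/2) powr (1 / real p) < real_of_int m \<and>
            real_of_int m < 2 * (real n - 1/2 + 1 / 2 ^ (p + 1)) powr (1 / real p))"
proof
  assume "\<exists>m::int.
            2 * (real n - 1/2) powr (1 / real p) < real_of_int m \<and>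
            real_of_int m < 2 * (real n - 1/2 + 1 / 2 ^ (p + 1)) powr (1 / real p)"
  then obtain m :: int
    where lower: "(real n - 1/2) powr (1 / real p) < real_of_int m / 2"
      and upper: "real_of_int m / 2 < (real n - 1/2 + 1 / 2 ^ (p + 1)) powr (1 / real p)"
    by (auto simp: mult.commute)
  define K :: int where "K = 2 ^ (p - 1) * (2 * int n - 1)"
  have p_pos: "0 < p" and base_nonneg: "0 \<le> real n - 1/2" using assms by auto
  have half_m_nonneg: "0 \<le> real_of_int m / 2"
    using lower by (smt (verit) powr_ge_zero)
  have "real n - 1/2 < (real_of_int m / 2) ^ p"
    using lower powr_inverse_less_iff[OF base_nonneg half_m_nonneg p_pos] by blast
  moreover have "(real_of_int m / 2) ^ p < real n - 1/2 + 1 / 2 ^ (p + 1)"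
    using upper less_powr_inverse_iff[OF _ half_m_nonneg p_pos] base_nonneg by simp
  ultimately have "2 ^ p * (real n - 1/2) < real_of_int (m ^ p)"
    and "real_of_int (m ^ p) < 2 ^ p * (real n - 1/2) + 1/2"
    by (simp_all add: power_divide field_simps)
  then have "real_of_int K < real_of_int (m ^ p)" and "real_of_int (m ^ p) < real_of_int (K + 1)"
    using two_power_times_half_odd[OF p_pos assms(2)] by (simp_all add: K_def)
  then have "K < m ^ p" and "m ^ p < K + 1"
    by (simp_all only: of_int_less_iff)
  then show False by linarith
qed

end
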